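(* Let $s$ be a non-empty string whose number $r$ of maximal runs is even. Then the only admissible bilateral run-peeling decomposition of $s$ that emits the minimum possible number of tokens is the one that, at every peeling step, takes $x=L$ and $y=R$ (i.e. peels both boundary runs completely, as Flashback does).
   Context: A maximal run of a string is a maximal block of consecutive equal symbols. An admissible bilateral run-peeling decomposition of a non-empty string $s$ is obtained by repeatedly applying the following rule to an active span (initially all of $s$) until it is consumed: (Termination) if the active span consists of a single run or of two adjacent runs, emit one terminal token for the span and stop; (Peeling step) otherwise, let $L$ be the length of the span's leading run (longest prefix of one repeated symbol) and $R$ the length of its trailing run (longest suffix of one repeated symbol), choose any integers $x\in\{1,\dots,L\}$ and $y\in\{1,\dots,R\}$, emit one token formed by the peeled prefix of length $x$ and the peeled suffix of length $y$, and continue with the remaining middle as the active span. *)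

theory Defs
  imports Main
begin

definition num_runs :: "'a list \<Rightarrow> nat" where
  "num_runs s = length (remdups_adj s)"

definition lead_run :: "'a list \<Rightarrow> nat" where
  "lead_run s = length (takeWhile (\<lambda>c. c = hd s) s)"

definition trail_run :: "'a list \<Rightarrow> nat" where
  "trail_run s = length (takeWhile (\<lambda>c. c = last s) (rev s))"

text \<open>Tokens: a terminal token for the final span, or a peeling token
  consisting of the peeled prefix and the peeled suffix.\<close>
datatype 'a token = Terminal "'a list" | Peel "'a list" "'a list"

text \<open>Admissible bilateral run-peeling decompositions: rpd s ts means the
  token sequence ts is emitted by some run of the procedure on the active span s.\<close>
inductive rpd :: "'a list \<Rightarrow> 'a token list \<Rightarrow> bool" where
  terminal: "s \<noteq> [] \<Longrightarrow> num_runs s \<le> 2 \<Longrightarrow> rpd s [Terminal s]"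
| peel: "num_runs s \<ge> 3 \<Longrightarrow> 1 \<le> x \<Longrightarrow> x \<le> lead_run s \<Longrightarrow>
         1 \<le> y \<Longrightarrow> y \<le> trail_run s \<Longrightarrow>
         rpd (drop x (take (length s - y) s)) ts \<Longrightarrow>
         rpd s (Peel (take x s) (drop (length s - y) s) # ts)"

inductive full_rpd :: "'a list \<Rightarrow> 'a token list \<Rightarrow> bool" where
  terminal: "s \<noteq> [] \<Longrightarrow> num_runs s \<le> 2 \<Longrightarrow> full_rpd s [Terminal s]"
| peel: "num_runs s \<ge> 3 \<Longrightarrow> x = lead_run s \<Longrightarrow> y = trail_run s \<Longrightarrow>
         full_rpd (drop x (take (length s - y) s)) ts \<Longrightarrow>
         full_rpd s (Peel (take x s) (drop (length s - y) s) # ts)"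

end

theory Submission
  imports Defs
begin

text \<open>A peeling step with parameters x, y removes
  2 - [x < L] - [y < R] of the runs of the active span, and the terminal token covers at
  most two runs. So every decomposition of a string with r runs has at least r/2 tokens,
  and a decomposition with exactly r/2 tokens must peel both boundary runs completely at
  every step. Conversely, full peeling removes exactly two runs per step, so for even r it
  ends on a span of exactly two runs after r/2 tokens.\<close>

abbreviation inner_span :: "nat \<Rightarrow> nat \<Rightarrow> 'a list \<Rightarrow> 'a list" where
  "inner_span x y s \<equiv> drop x (take (length s - y) s)"

lemma num_runs_Nil [simp]: "num_runs [] = 0"
  by (simp add: num_runs_def)

lemma num_runs_replicate [simp]: "num_runs (replicate k a) = of_bool (k > 0)"
  by (simp add: num_runs_def remdups_adj_replicate)

lemma num_runs_Cons:
  "num_runs (a # xs) = (if xs \<noteq> [] \<and> hd xs = a then num_runs xs else Suc (num_runs xs))"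
  by (cases xs) (auto simp: num_runs_def)

lemma num_runs_append:
  assumes "xs = [] \<or> ys = [] \<or> last xs \<noteq> hd ys"
  shows "num_runs (xs @ ys) = num_runs xs + num_runs ys"
  using assms
proof (induction xs)
  case (Cons a xs)
  then show ?case by (cases xs) (auto simp: num_runs_Cons)
qed simp

lemma num_runs_pos: "s \<noteq> [] \<Longrightarrow> 0 < num_runs s"
  by (simp add: num_runs_def)

lemma trail_run_eq_lead_run_rev: "trail_run s = lead_run (rev s)"
  by (cases "s = []") (simp_all add: trail_run_def lead_run_def hd_rev)

lemma lead_run_split:
  assumes "s \<noteq> []"
  obtains t where "s = replicate (lead_run s) (hd s) @ t" "0 < lead_run s" "t \<noteq> [] \<Longrightarrow> hd t \<noteq> hd s"
proof
  have "takeWhile (\<lambda>c. c = hd s) s = replicate (lead_run s) (hd s)"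
    unfolding lead_run_def by (metis (mono_tags) replicate_length_same set_takeWhileD)
  then show "s = replicate (lead_run s) (hd s) @ dropWhile (\<lambda>c. c = hd s) s"
    by (metis takeWhile_dropWhile_id)
  show "0 < lead_run s"
    using assms by (cases s) (simp_all add: lead_run_def)
  show "dropWhile (\<lambda>c. c = hd s) s \<noteq> [] \<Longrightarrow> hd (dropWhile (\<lambda>c. c = hd s) s) \<noteq> hd s"
    using hd_dropWhile[of "\<lambda>c. c = hd s" s] by simp
qed

lemma trail_run_split:
  assumes "s \<noteq> []"
  obtains t where "s = t @ replicate (trail_run s) (last s)" "0 < trail_run s" "t \<noteq> [] \<Longrightarrow> last t \<noteq> last s"
proof -
  obtain u where "rev s = replicate (trail_run s) (last s) @ u" "0 < trail_run s"
    "u \<noteq> [] \<Longrightarrow> hd u \<noteq> last s"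
    using lead_run_split[of "rev s"] assms by (metis hd_rev rev_is_Nil_conv trail_run_eq_lead_run_rev)
  moreover from this(1) have "s = rev u @ replicate (trail_run s) (last s)"
    by (metis rev_append rev_replicate rev_rev_ident)
  ultimately show thesis
    using that[of "rev u"] by (simp add: last_rev)
qed

lemma lead_run_pos: "s \<noteq> [] \<Longrightarrow> 0 < lead_run s"
  by (metis lead_run_split)

lemma trail_run_pos: "s \<noteq> [] \<Longrightarrow> 0 < trail_run s"
  by (metis trail_run_split)

lemma trail_run_append:
  assumes "c \<in> set ys" "c \<noteq> last ys"
  shows "trail_run (xs @ ys) = trail_run ys"
proof -
  have "last (xs @ ys) = last ys"
    using assms(1) by (metis empty_iff empty_set last_appendR)
  then show ?thesis
    using assms unfolding trail_run_def by (simp add: takeWhile_append1[where x = c])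
qed

lemma num_runs_replicate_append_replicate:
  assumes "m \<noteq> []" "hd m \<noteq> a" "last m \<noteq> b"
  shows "num_runs (replicate k a @ m @ replicate l b) = of_bool (0 < k) + num_runs m + of_bool (0 < l)"
  using assms by (simp add: num_runs_append)

lemma inner_span_append: "inner_span (length xs) (length zs) (xs @ ys @ zs) = ys"
  by simp

lemma three_runs_split:
  assumes "3 \<le> num_runs s"
  obtains m where "s = replicate (lead_run s) (hd s) @ m @ replicate (trail_run s) (last s)"
    "m \<noteq> []" "hd m \<noteq> hd s" "last m \<noteq> last s" "0 < lead_run s" "0 < trail_run s"
proof -
  define L a where "L = lead_run s" and "a = hd s"
  have "s \<noteq> []"
    using assms by auto
  then obtain t where s: "s = replicate L a @ t" and L: "0 < L" and ht: "t \<noteq> [] \<Longrightarrow> hd t \<noteq> a"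
    unfolding L_def a_def by (metis lead_run_split)
  have runs_s: "num_runs s = 1 + num_runs t"
    using s L ht by (cases "t = []") (simp_all add: num_runs_append)
  then have "t \<noteq> []"
    using assms by auto
  define R b where "R = trail_run t" and "b = last t"
  obtain m where t: "t = m @ replicate R b" and R: "0 < R" and lm: "m \<noteq> [] \<Longrightarrow> last m \<noteq> b"
    using \<open>t \<noteq> []\<close> unfolding R_def b_def by (metis trail_run_split)
  have "num_runs t = num_runs m + 1"
    using t R lm by (cases "m = []") (simp_all add: num_runs_append)
  then have "m \<noteq> []"
    using assms runs_s by auto
  have "last s = b"
    using s \<open>t \<noteq> []\<close> unfolding b_def by simp
  moreover have "last m \<in> set t"
    using t \<open>m \<noteq> []\<close> by simp
  then have "trail_run s = R"
    using s trail_run_append[of "last m" t] lm \<open>m \<noteq> []\<close> unfolding R_def b_def by simp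
  ultimately show thesis
    using that[of m] s t L R lm ht \<open>m \<noteq> []\<close> unfolding L_def a_def by auto
qed

lemma num_runs_inner_span:
  assumes "3 \<le> num_runs s" "x \<le> lead_run s" "y \<le> trail_run s"
  shows "num_runs (inner_span x y s) + 2 = num_runs s + of_bool (x < lead_run s) + of_bool (y < trail_run s)"
proof -
  define L R a b where "L = lead_run s" and "R = trail_run s" and "a = hd s" and "b = last s"
  obtain m where s: "s = replicate L a @ m @ replicate R b"
    and m: "m \<noteq> []" "hd m \<noteq> a" "last m \<noteq> b" and pos: "0 < L" "0 < R"
    using assms(1) unfolding L_def R_def a_def b_def by (rule three_runs_split)
  define M where "M = replicate (L - x) a @ m @ replicate (R - y) b"
  have "replicate L a = replicate x a @ replicate (L - x) a"
    using assms(2) unfolding L_def by (simp flip: replicate_add)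
  moreover have "replicate R b = replicate (R - y) b @ replicate y b"
    using assms(3) unfolding R_def by (simp flip: replicate_add)
  ultimately have "s = replicate x a @ M @ replicate y b"
    using s unfolding M_def by simp
  then have "inner_span x y s = M"
    by (metis inner_span_append length_replicate)
  moreover have "num_runs M = of_bool (x < L) + num_runs m + of_bool (y < R)"
    unfolding M_def using m by (simp add: num_runs_replicate_append_replicate)
  moreover have "num_runs s = 1 + num_runs m + 1"
    unfolding s using m pos by (simp add: num_runs_replicate_append_replicate)
  ultimately show ?thesis
    unfolding L_def R_def by simp
qed

lemma rpd_num_runs_le: "rpd s ts \<Longrightarrow> num_runs s \<le> 2 * length ts"
proof (induction rule: rpd.induct)
  case (peel s x y ts)
  then show ?case
    using num_runs_inner_span[of s x y] by simp
qed simp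

lemma rpd_tight_imp_full_rpd:
  "rpd s ts \<Longrightarrow> num_runs s = 2 * length ts \<Longrightarrow> full_rpd s ts"
proof (induction rule: rpd.induct)
  case (terminal s)
  then show ?case
    by (simp add: full_rpd.terminal)
next
  case (peel s x y ts)
  have "num_runs (inner_span x y s) \<le> 2 * length ts"
    using peel.hyps(6) by (rule rpd_num_runs_le)
  moreover have "num_runs (inner_span x y s) + 2 = num_runs s + of_bool (x < lead_run s) + of_bool (y < trail_run s)"
    using peel.hyps(1,3,5) by (rule num_runs_inner_span)
  ultimately have "x = lead_run s" "y = trail_run s" "num_runs (inner_span x y s) = 2 * length ts"
    using peel.prems peel.hyps(3,5) by auto
  then show ?case
    using peel.hyps(1) peel.IH by (auto intro: full_rpd.peel)
qed

lemma full_rpd_imp_rpd: "full_rpd s ts \<Longrightarrow> rpd s ts"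
proof (induction rule: full_rpd.induct)
  case (terminal s)
  then show ?case
    by (rule rpd.terminal)
next
  case (peel s x y ts)
  then have "s \<noteq> []"
    by auto
  then show ?case
    using rpd.peel[of s "lead_run s" "trail_run s" ts] peel lead_run_pos[of s] trail_run_pos[of s]
    by (simp add: Suc_le_eq)
qed

lemma full_rpd_length: "full_rpd s ts \<Longrightarrow> 2 * length ts = num_runs s + num_runs s mod 2"
proof (induction rule: full_rpd.induct)
  case (terminal s)
  then have "num_runs s = 1 \<or> num_runs s = 2"
    using num_runs_pos[of s] by auto
  then show ?case
    by auto
next
  case (peel s x y ts)
  then have runs: "num_runs s = num_runs (inner_span x y s) + 2"
    using num_runs_inner_span[of s x y] by simp
  with peel.IH show ?case
    by simp
qed

lemma full_rpd_exists: "s \<noteq> [] \<Longrightarrow> \<exists>ts. full_rpd s ts"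
proof (induction "length s" arbitrary: s rule: less_induct)
  case less
  show ?case
  proof (cases "num_runs s \<le> 2")
    case True
    then show ?thesis
      using less.prems full_rpd.terminal by blast
  next
    case False
    define s' where "s' = inner_span (lead_run s) (trail_run s) s"
    have "num_runs s' + 2 = num_runs s"
      using False num_runs_inner_span[of s "lead_run s" "trail_run s"] unfolding s'_def by simp
    then have "s' \<noteq> []"
      using False by auto
    moreover have "length s' < length s"
      using lead_run_pos[OF less.prems] less.prems unfolding s'_def by auto
    ultimately obtain ts where "full_rpd s' ts"
      using less.hyps by blast
    then have "full_rpd s (Peel (take (lead_run s) s) (drop (length s - trail_run s) s) # ts)"
      using False unfolding s'_def by (simp add: full_rpd.peel)
    then show ?thesis ..
  qed
qed

theorem corollary6p5:
  fixes s :: "'a list" and ts :: "'a token list"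
  assumes "s \<noteq> []" and "even (num_runs s)" and "rpd s ts"
  shows "(\<forall>ts'. rpd s ts' \<longrightarrow> length ts \<le> length ts') \<longleftrightarrow> full_rpd s ts"
proof
  assume minimal: "\<forall>ts'. rpd s ts' \<longrightarrow> length ts \<le> length ts'"
  obtain ts0 where full: "full_rpd s ts0"
    using full_rpd_exists[OF assms(1)] by blast
  have "rpd s ts0"
    using full by (rule full_rpd_imp_rpd)
  moreover have "num_runs s = 2 * length ts0"
    using full_rpd_length[OF full] assms(2) by (simp add: even_iff_mod_2_eq_zero)
  ultimately have "num_runs s = 2 * length ts"
    using minimal rpd_num_runs_le[OF assms(3)] by fastforce
  then show "full_rpd s ts"
    by (rule rpd_tight_imp_full_rpd[OF assms(3)])
next
  assume "full_rpd s ts"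
  then have "num_runs s = 2 * length ts"
    using full_rpd_length[of s ts] assms(2) by (simp add: even_iff_mod_2_eq_zero)
  then show "\<forall>ts'. rpd s ts' \<longrightarrow> length ts \<le> length ts'"
    using rpd_num_runs_le by fastforce
qed

end
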